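(* Let $\mathrm{pr}:\mathrm{GL}_3(A)\to\mathrm{GL}_3(\mathbb{F}_q)$ be reduction modulo $t$. For integers $0\le j\le k$, $$\mathrm{pr}(\mathrm{GL}_3(A)_{[j,k]})=\begin{cases}\mathrm{GL}_3(\mathbb{F}_q)&\text{if }0=j=k,\\ P_0&\text{if }0=j<k,\\ P_2&\text{if }0<j=k,\\ B&\text{if }0<j<k.\end{cases}$$ For a higher-dimensional simplex $w$ all of whose vertices are of the form $[j,k]$ with $0\le j\le k$, $\mathrm{pr}(\mathrm{GL}_3(A)_w)=\bigcap_{v\in w}\mathrm{pr}(\mathrm{GL}_3(A)_v)$.
   Context: Let $q$ be a prime power, $A=\mathbb{F}_q[t]$, $F_\infty=\mathbb{F}_q((1/t))$, $\pi=1/t$, $\mathcal{O}_\infty=\mathbb{F}_q[[\pi]]$. $\mathcal{B}$ is the Bruhat–Tits building of $\mathrm{PGL}_3(F_\infty)$ (vertices: homothety classes of $\mathcal{O}_\infty$-lattices in $F_\infty^3$; simplices: sets $\{v_0,\dots,v_k\}$ with representatives $L_0\supsetneq\cdots\supsetneq L_k\supsetneq\pi L_0$), with $\mathrm{GL}_3(A)$ acting by $g[L]=[gL]$; $\mathrm{GL}_3(A)_w$ is the stabilizer of $w$. $[j,k]$ is the class of the lattice spanned by $e_1,\pi^je_2,\pi^ke_3$. $B\subset\mathrm{GL}_3(\mathbb{F}_q)$ is the group of invertible upper triangular matrices; $P_0$ is the group of $(a_{rs})\in\mathrm{GL}_3(\mathbb{F}_q)$ with $a_{31}=a_{32}=0$;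 $P_2$ is the group with $a_{21}=a_{31}=0$. *)

theory Defs
  imports "HOL-Analysis.Analysis" "HOL-Computational_Algebra.Computational_Algebra"
begin

text \<open>Throughout, the finite field F_q is a type variable 'a of class finite field;
  A = F_q[t] is the type 'a poly; F_infinity = F_q((1/t)) is the Laurent series type
  'a fls in the uniformizer pi = 1/t = fls_X; vectors in F_infinity^3 are 'a fls ^ 3.
  Indices of the numeral type 3 are written 1, 2, 3 (for e_1, e_2, e_3).\<close>

definition O_inf :: "'a::field fls set" where
  "O_inf = {x. x = 0 \<or> fls_subdegree x \<ge> 0}"

definition poly_to_Finf :: "'a::field poly \<Rightarrow> 'a fls" where
  "poly_to_Finf p = (\<Sum>i\<le>degree p. fls_const (coeff p i) * fls_X_inv ^ i)"

definition mat_to_Finf :: "'a::field poly ^3^3 \<Rightarrow> 'a fls ^3^3" where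
  "mat_to_Finf g = (\<chi> i j. poly_to_Finf (g $ i $ j))"

definition lattice_span :: "'a::field fls ^3^3 \<Rightarrow> ('a fls ^3) set" where
  "lattice_span M = {M *v c | c. \<forall>i. c $ i \<in> O_inf}"

definition is_lattice :: "('a::field fls ^3) set \<Rightarrow> bool" where
  "is_lattice L \<longleftrightarrow> (\<exists>M. det M \<noteq> 0 \<and> L = lattice_span M)"

definition lat_class :: "('a::field fls ^3) set \<Rightarrow> ('a fls ^3) set set" where
  "lat_class L = {(\<lambda>v. c *s v) ` L | c. c \<noteq> 0}"

definition is_vertex :: "('a::field fls ^3) set set \<Rightarrow> bool" where
  "is_vertex v \<longleftrightarrow> (\<exists>L. is_lattice L \<and> v = lat_class L)"

definition is_simplex :: "('a::field fls ^3) set set set \<Rightarrow> bool" where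
  "is_simplex W \<longleftrightarrow> (\<exists>Ls. Ls \<noteq> [] \<and> (\<forall>L\<in>set Ls. is_lattice L) \<and>
      W = lat_class ` set Ls \<and> sorted_wrt (\<supset>) Ls \<and>
      (\<forall>L\<in>set Ls. (\<lambda>v. fls_X *s v) ` hd Ls \<subset> L))"

definition GL3A :: "('a::field poly ^3^3) set" where
  "GL3A = {g. is_unit (det g)}"

definition GL3F :: "('a::field ^3^3) set" where
  "GL3F = {M. det M \<noteq> 0}"

definition vact :: "'a::field poly ^3^3 \<Rightarrow> ('a fls ^3) set set \<Rightarrow> ('a fls ^3) set set" where
  "vact g v = (\<lambda>L. (\<lambda>x. mat_to_Finf g *v x) ` L) ` v"

definition stab_vertex :: "('a::field fls ^3) set set \<Rightarrow> ('a poly ^3^3) set" where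
  "stab_vertex v = {g \<in> GL3A. vact g v = v}"

definition stab_simplex :: "('a::field fls ^3) set set set \<Rightarrow> ('a poly ^3^3) set" where
  "stab_simplex W = {g \<in> GL3A. vact g ` W = W}"

definition vtx :: "nat \<Rightarrow> nat \<Rightarrow> ('a::field fls ^3) set set" where
  "vtx j k = lat_class (lattice_span (\<chi> r s. if r = s then
       (if r = 1 then 1 else if r = 2 then fls_X ^ j else fls_X ^ k) else 0))"

definition pr :: "'a::field poly ^3^3 \<Rightarrow> 'a ^3^3" where
  "pr g = (\<chi> r s. poly (g $ r $ s) 0)"

definition Borel :: "('a::field ^3^3) set" where
  "Borel = {M \<in> GL3F. M $ 2 $ 1 = 0 \<and> M $ 3 $ 1 = 0 \<and> M $ 3 $ 2 = 0}"

definition P0 :: "('a::field ^3^3) set" where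
  "P0 = {M \<in> GL3F. M $ 3 $ 1 = 0 \<and> M $ 3 $ 2 = 0}"

definition P2 :: "('a::field ^3^3) set" where
  "P2 = {M \<in> GL3F. M $ 2 $ 1 = 0 \<and> M $ 3 $ 1 = 0}"

end

theory Submission
  imports Defs
begin

text \<open>
  The vertex [j,k] is the class of the diagonal lattice {x. v(x_r) \<ge> e_r} with e = (0, j, k).
  If g \<in> GL_3(A) maps the diagonal lattice of e onto pi^m times that of f, then every entry has
  v(g_rs) \<ge> f_r + m - e_s, and comparing determinants (det g is a nonzero constant) gives
  e_1 + e_2 + e_3 = f_1 + f_2 + f_3 + 3m. A nonzero polynomial has valuation -deg \<le> 0 at infinity,
  so a stabiliser of [j,k] has m = 0 and g_rs = 0 whenever e_s < e_r: pr g lies in the parabolic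
  subgroup cut out by these zeros. Conversely a constant matrix of that parabolic stabilises the
  lattice, since its inverse, a polynomial in it by Cayley--Hamilton, has the same zero pattern.
  For a simplex, the lattices of the chain between L_0 and pi L_0 have exponent sums in a window of
  length 3, so the relation above forces m = 0; comparable diagonal lattices with equal exponent
  sums coincide, hence a stabiliser of the simplex fixes every vertex.
\<close>

\<comment> \<open>Keep $ for vector indexing only: Formal_Laurent_Series leaks the fps_nth notation, and the
  resulting ambiguity makes terms with many $ parse exponentially slowly.\<close>
unbundle no Formal_Power_Series.fps_syntax

definition val_ge :: "int \<Rightarrow> 'a::field fls \<Rightarrow> bool" where
  "val_ge K x \<longleftrightarrow> x = 0 \<or> K \<le> fls_subdegree x"

lemma val_ge_0 [simp]: "val_ge K 0"
  by (simp add: val_ge_def)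

lemma val_ge_mono: "val_ge K x \<Longrightarrow> K' \<le> K \<Longrightarrow> val_ge K' x"
  by (auto simp: val_ge_def)

lemma val_ge_add:
  assumes "val_ge K x" "val_ge K y"
  shows "val_ge K (x + y)"
proof (cases "x + y = 0 \<or> x = 0 \<or> y = 0")
  case False
  then have "min (fls_subdegree x) (fls_subdegree y) \<le> fls_subdegree (x + y)"
    using fls_plus_subdegree by blast
  then show ?thesis using assms False by (auto simp: val_ge_def)
qed (use assms in \<open>auto simp: val_ge_def\<close>)

lemma val_ge_diff:
  assumes "val_ge K x" "val_ge K y"
  shows "val_ge K (x - y)"
  using val_ge_add[of K x "- y"] assms by (simp add: val_ge_def)

lemma val_ge_mult: "val_ge a x \<Longrightarrow> val_ge b y \<Longrightarrow> val_ge (a + b) (x * y)"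
  by (cases "x = 0"; cases "y = 0") (auto simp: val_ge_def)

lemma val_ge_sum: "(\<And>i. i \<in> A \<Longrightarrow> val_ge K (f i)) \<Longrightarrow> val_ge K (\<Sum>i\<in>A. f i)"
  by (induction A rule: infinite_finite_induct) (auto intro: val_ge_add)

lemma val_ge_fls_shift_1_iff [simp]: "val_ge K (fls_shift n 1 :: 'a::field fls) \<longleftrightarrow> K \<le> - n"
  by (simp add: val_ge_def fls_shift_eq0_iff)

lemma val_ge_det_3:
  fixes M :: "'a::field fls ^3^3"
  assumes "\<And>r s. val_ge (a r + b s) (M $ r $ s)"
  shows "val_ge (a 1 + a 2 + a 3 + b 1 + b 2 + b 3) (det M)"
  unfolding det_3
  by (intro val_ge_diff val_ge_add;
      rule val_ge_mono[OF val_ge_mult[OF val_ge_mult[OF assms assms] assms]]; simp)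

text \<open>Stated with fls_shift a 1, the simp-normal form of fls_X_intpow (- a).\<close>
lemma fls_X_intpow_mult_neg: "fls_X_intpow a * fls_shift a 1 = (1 :: 'a::field fls)"
  using fls_X_intpow_times_fls_X_intpow[of a "- a", where 'a='a] by simp

definition diag_lattice :: "(3 \<Rightarrow> int) \<Rightarrow> ('a::field fls ^3) set" where
  "diag_lattice e = {x. \<forall>r. val_ge (e r) (x $ r)}"

definition exp_sum :: "(3 \<Rightarrow> int) \<Rightarrow> int" where
  "exp_sum e = e 1 + e 2 + e 3"

lemma exp_sum_shift [simp]: "exp_sum (\<lambda>r. e r + m) = exp_sum e + 3 * m"
  by (simp add: exp_sum_def)

lemma exp_sum_mono: "(\<And>r. e r \<le> f r) \<Longrightarrow> exp_sum e \<le> exp_sum f"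
  by (simp add: exp_sum_def add_mono)

lemma exp_sum_strict_mono:
  assumes "\<And>r. e r \<le> f r" "e \<noteq> f"
  shows "exp_sum e < exp_sum f"
proof -
  obtain r where "e r < f r"
    using assms by (metis ext order_less_le)
  then show ?thesis
    using assms(1)[of 1] assms(1)[of 2] assms(1)[of 3] exhaust_3[of r]
    by (auto simp: exp_sum_def)
qed

lemma eq_of_le_exp_sum_eq: "(\<And>r. e r \<le> f r) \<Longrightarrow> exp_sum e = exp_sum f \<Longrightarrow> e = f"
  using exp_sum_strict_mono[of e f] by fastforce

lemma axis_fls_X_intpow_in_diag_lattice: "axis s (fls_X_intpow (e s)) \<in> diag_lattice e"
  by (simp add: diag_lattice_def axis_def)

lemma smult_diag_lattice:
  fixes c :: "'a::field fls"
  assumes "c \<noteq> 0"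
  shows "(\<lambda>v. c *s v) ` diag_lattice e = diag_lattice (\<lambda>r. e r + fls_subdegree c)"
proof (intro set_eqI iffI)
  fix x :: "'a fls ^3"
  have c: "val_ge (fls_subdegree c) c" "val_ge (fls_subdegree (inverse c)) (inverse c)"
    by (simp_all add: val_ge_def)
  {
    assume "x \<in> (\<lambda>v. c *s v) ` diag_lattice e"
    then show "x \<in> diag_lattice (\<lambda>r. e r + fls_subdegree c)"
      using val_ge_mult[OF c(1)] by (fastforce simp: diag_lattice_def add.commute)
  next
    assume x: "x \<in> diag_lattice (\<lambda>r. e r + fls_subdegree c)"
    have "inverse c *s x \<in> diag_lattice e"
      using val_ge_mult[OF c(2)] x assms by (fastforce simp: diag_lattice_def)
    moreover have "x = c *s (inverse c *s x)"
      using assms by (simp add: vector_smult_assoc)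
    ultimately show "x \<in> (\<lambda>v. c *s v) ` diag_lattice e" by blast
  }
qed

lemma diag_lattice_subset_iff:
  "diag_lattice e \<subseteq> (diag_lattice f :: ('a::field fls ^3) set) \<longleftrightarrow> (\<forall>r. f r \<le> e r)"
proof
  assume "diag_lattice e \<subseteq> (diag_lattice f :: ('a fls ^3) set)"
  then have "axis r (fls_X_intpow (e r)) \<in> (diag_lattice f :: ('a fls ^3) set)" for r
    using axis_fls_X_intpow_in_diag_lattice by blast
  then have "val_ge (f r) (fls_X_intpow (e r) :: 'a fls)" for r
    unfolding diag_lattice_def by (metis (mono_tags) axis_nth mem_Collect_eq)
  then show "\<forall>r. f r \<le> e r"
    by (simp add: val_ge_def)
qed (auto simp: diag_lattice_def intro: val_ge_mono)

lemma lattice_span_diag: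
  "lattice_span (\<chi> r s. if r = s then fls_X_intpow (e r) else 0) = (diag_lattice e :: ('a::field fls ^3) set)"
proof -
  let ?D = "(\<chi> r s. if r = s then fls_X_intpow (e r) else 0) :: 'a fls ^3^3"
  have D: "(?D *v c) $ r = fls_X_intpow (e r) * c $ r" for c :: "'a fls ^3" and r
    by (simp add: matrix_vector_mult_def if_distrib if_distribR cong: if_cong)
  have "x \<in> lattice_span ?D \<longleftrightarrow> x \<in> diag_lattice e" for x :: "'a fls ^3"
  proof
    assume "x \<in> lattice_span ?D"
    then obtain c :: "'a fls ^3" where c: "\<forall>i. c $ i \<in> O_inf" and x: "x = ?D *v c"
      unfolding lattice_span_def by blast
    have "val_ge (e r + 0) (fls_X_intpow (e r) * c $ r)" for r
      by (rule val_ge_mult) (use c in \<open>auto simp: O_inf_def val_ge_def\<close>)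
    then show "x \<in> diag_lattice e" by (simp add: diag_lattice_def D x)
  next
    assume x: "x \<in> diag_lattice e"
    define c :: "'a fls ^3" where "c = (\<chi> r. fls_X_intpow (- e r) * x $ r)"
    have "val_ge (- e r + e r) (fls_X_intpow (- e r) * x $ r)" for r
      using x by (intro val_ge_mult) (auto simp: diag_lattice_def)
    then have "\<forall>i. c $ i \<in> O_inf" by (simp add: c_def val_ge_def O_inf_def)
    moreover have "x = ?D *v c"
      by (simp add: vec_eq_iff D c_def mult.assoc[symmetric] fls_X_intpow_mult_neg)
    ultimately show "x \<in> lattice_span ?D" unfolding lattice_span_def by blast
  qed
  then show ?thesis by blast
qed

lemma lat_class_self: "L \<in> lat_class L"
  unfolding lat_class_def by (rule CollectI, rule exI[of _ 1]) simp

lemma mem_lat_class_diag_lattice: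
  "L \<in> lat_class (diag_lattice e :: ('a::field fls ^3) set) \<longleftrightarrow> (\<exists>m. L = diag_lattice (\<lambda>r. e r + m))"
proof
  assume "L \<in> lat_class (diag_lattice e)"
  then show "\<exists>m. L = diag_lattice (\<lambda>r. e r + m)"
    unfolding lat_class_def using smult_diag_lattice by blast
next
  assume "\<exists>m. L = diag_lattice (\<lambda>r. e r + m)"
  then obtain m where "L = diag_lattice (\<lambda>r. e r + m)" ..
  then have "L = (\<lambda>v. fls_X_intpow m *s v) ` (diag_lattice e :: ('a fls ^3) set)"
    using smult_diag_lattice[of "fls_X_intpow m :: 'a fls" e] by simp
  then show "L \<in> lat_class (diag_lattice e)"
    unfolding lat_class_def using fls_X_intpow_nonzero by blast
qed

lemma lat_class_eq_diag_lattice: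
  assumes "lat_class L = lat_class (diag_lattice e :: ('a::field fls ^3) set)"
  obtains f where "L = diag_lattice f"
  using lat_class_self[of L] assms mem_lat_class_diag_lattice by blast

lemma vact_lat_class:
  "vact g (lat_class L) = lat_class ((\<lambda>x. mat_to_Finf g *v x) ` L)"
proof -
  let ?N = "mat_to_Finf g"
  have comm: "(\<lambda>x. ?N *v x) ` (\<lambda>v. c *s v) ` L = (\<lambda>v. c *s v) ` (\<lambda>x. ?N *v x) ` L" for c
    by (simp add: image_image vector_scalar_commute)
  have "vact g (lat_class L) = {(\<lambda>x. ?N *v x) ` (\<lambda>v. c *s v) ` L | c. c \<noteq> 0}"
    unfolding vact_def lat_class_def by blast
  then show ?thesis unfolding comm lat_class_def .
qed

definition vtx_exponents :: "nat \<Rightarrow> nat \<Rightarrow> 3 \<Rightarrow> int" where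
  "vtx_exponents j k r = (if r = 1 then 0 else if r = 2 then int j else int k)"

lemma vtx_eq_lat_class_diag_lattice:
  "vtx j k = lat_class (diag_lattice (vtx_exponents j k))"
proof -
  have "(if r = 1 then 1 else if r = 2 then fls_X ^ j else fls_X ^ k)
      = (fls_X_intpow (vtx_exponents j k r) :: 'a::field fls)" for r
    by (simp add: vtx_exponents_def fls_X_power_conv_shift_1)
  then have "vtx j k = lat_class (lattice_span
      (\<chi> r s. if r = s then fls_X_intpow (vtx_exponents j k r) else (0 :: 'a fls)))"
    unfolding vtx_def by (simp only:)
  then show ?thesis by (simp only: lattice_span_diag)
qed

lemma fls_const_sum: "fls_const (\<Sum>i\<in>A. f i) = (\<Sum>i\<in>A. fls_const (f i) :: 'a::field fls)"
  by (induction A rule: infinite_finite_induct) (auto simp: fls_plus_const[symmetric])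

lemma poly_to_Finf_eq_poly: "poly_to_Finf p = poly (map_poly fls_const p) fls_X_inv"
  by (simp add: poly_to_Finf_def poly_altdef degree_map_poly coeff_map_poly)

lemma poly_to_Finf_add: "poly_to_Finf (p + q) = poly_to_Finf p + poly_to_Finf q"
proof -
  have "map_poly fls_const (p + q) = map_poly fls_const p + map_poly fls_const q"
    by (rule poly_eqI) (simp add: coeff_map_poly fls_plus_const)
  then show ?thesis by (simp add: poly_to_Finf_eq_poly)
qed

lemma poly_to_Finf_diff: "poly_to_Finf (p - q) = poly_to_Finf p - poly_to_Finf q"
proof -
  have "map_poly fls_const (p - q) = map_poly fls_const p - map_poly fls_const q"
    by (rule poly_eqI) (simp add: coeff_map_poly fls_minus_const)
  then show ?thesis by (simp add: poly_to_Finf_eq_poly)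
qed

lemma poly_to_Finf_mult: "poly_to_Finf (p * q) = poly_to_Finf p * poly_to_Finf q"
proof -
  have "map_poly fls_const (p * q) = map_poly fls_const p * map_poly fls_const q"
    by (rule poly_eqI) (simp add: coeff_map_poly coeff_mult fls_const_sum)
  then show ?thesis by (simp add: poly_to_Finf_eq_poly)
qed

lemma poly_to_Finf_const [simp]: "poly_to_Finf [:c:] = fls_const c"
  by (simp add: poly_to_Finf_def)

lemma det_mat_to_Finf: "det (mat_to_Finf g) = poly_to_Finf (det g)"
  by (simp add: det_3 mat_to_Finf_def poly_to_Finf_add poly_to_Finf_diff poly_to_Finf_mult)

lemma fls_nth_poly_to_Finf_degree: "fls_nth (poly_to_Finf p) (- int (degree p)) = lead_coeff p"
proof -
  have "fls_nth (poly_to_Finf p) (- int (degree p))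
      = (\<Sum>i\<le>degree p. coeff p i * (if - int (degree p) = - int i then 1 else 0))"
    by (simp add: poly_to_Finf_def fls_nth_sum)
  also have "\<dots> = (\<Sum>i\<le>degree p. if degree p = i then coeff p i else 0)"
    by (rule sum.cong) auto
  finally show ?thesis by simp
qed

lemma val_ge_poly_to_Finf:
  assumes "val_ge K (poly_to_Finf p)" "p \<noteq> 0"
  shows "K \<le> 0"
proof -
  have nz: "fls_nth (poly_to_Finf p) (- int (degree p)) \<noteq> 0"
    using assms(2) by (simp add: fls_nth_poly_to_Finf_degree)
  then have "K \<le> fls_subdegree (poly_to_Finf p)"
    using assms(1) by (auto simp: val_ge_def)
  also have "\<dots> \<le> - int (degree p)" by (rule fls_subdegree_leI[OF nz])
  finally show ?thesis by simp
qed

lemma GL3A_det_eq_const: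
  assumes "g \<in> GL3A"
  obtains c where "c \<noteq> 0" "det g = [:c:]"
proof -
  obtain c where "det g = [:c:]" "c dvd 1"
    using assms is_unit_poly_iff[of "det g"] by (auto simp: GL3A_def)
  then show thesis using that by fastforce
qed

lemma det_mat_to_Finf_GL3A:
  assumes "g \<in> GL3A"
  shows "det (mat_to_Finf g) \<noteq> 0" "fls_subdegree (det (mat_to_Finf g)) = 0"
  using GL3A_det_eq_const[OF assms] by (metis det_mat_to_Finf poly_to_Finf_const fls_const_subdegree fls_const_nonzero)+

lemma det_pr: "det (pr g) = poly (det g) 0"
  by (simp add: det_3 pr_def)

lemma pr_in_GL3F: "g \<in> GL3A \<Longrightarrow> pr g \<in> GL3F"
  by (elim GL3A_det_eq_const) (simp add: GL3F_def det_pr)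

lemma matrix_vector_mult_axis: "(N *v axis s c) $ r = N $ r $ s * (c :: 'a::comm_ring_1)"
proof -
  have "(N *v axis s c) $ r = (\<Sum>j\<in>UNIV. if j = s then N $ r $ j * c else 0)"
    unfolding matrix_vector_mult_def axis_def by (simp add: if_distrib cong: if_cong)
  then show ?thesis by simp
qed

lemma val_ge_entries_of_image_subset:
  fixes N :: "'a::field fls ^3^3"
  assumes "(\<lambda>x. N *v x) ` diag_lattice e \<subseteq> diag_lattice f"
  shows "val_ge (f r - e s) (N $ r $ s)"
proof -
  have "N *v axis s (fls_X_intpow (e s)) \<in> diag_lattice f"
    using assms axis_fls_X_intpow_in_diag_lattice by blast
  then have "val_ge (f r) (N $ r $ s * fls_X_intpow (e s))"
    by (simp add: diag_lattice_def matrix_vector_mult_axis)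
  then have "val_ge (f r + - e s) (N $ r $ s * fls_X_intpow (e s) * fls_shift (e s) 1)"
    by (rule val_ge_mult) simp
  then show ?thesis by (simp add: mult.assoc fls_X_intpow_mult_neg)
qed

lemma exp_sum_eq_of_image_diag_lattice:
  fixes N :: "'a::field fls ^3^3"
  assumes det: "det N \<noteq> 0" "fls_subdegree (det N) = 0"
    and img: "(\<lambda>x. N *v x) ` diag_lattice e = diag_lattice f"
  shows "exp_sum f = exp_sum e"
proof -
  have "val_ge (f 1 + f 2 + f 3 + - e 1 + - e 2 + - e 3) (det N)"
    using val_ge_entries_of_image_subset[of N e f] img by (intro val_ge_det_3) simp
  then have le: "exp_sum f \<le> exp_sum e"
    using det by (simp add: val_ge_def exp_sum_def)
  text \<open>Conversely, the preimages of the vectors X^(f s) e_s are the columns of a matrix X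
    with N X = diag(X^(f s)) and v(det X) \<ge> exp_sum e.\<close>
  have "\<exists>x\<in>diag_lattice e. N *v x = axis s (fls_X_intpow (f s))" for s
    using img axis_fls_X_intpow_in_diag_lattice[of s f] by (metis imageE)
  then obtain xs where xs: "\<And>s. xs s \<in> diag_lattice e"
    "\<And>s. N *v xs s = axis s (fls_X_intpow (f s))" by metis
  define X where "X = (\<chi> r s. xs s $ r)"
  have "(N ** X) $ r $ s = (N *v xs s) $ r" for r s
    by (simp add: matrix_matrix_mult_def matrix_vector_mult_def X_def)
  then have "N ** X = (\<chi> r s. if r = s then fls_X_intpow (f s) else 0)"
    by (simp add: vec_eq_iff xs(2) axis_def)
  then have "det (N ** X) = fls_X_intpow (f 1) * fls_X_intpow (f 2) * fls_X_intpow (f 3)"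
    by (simp add: det_3)
  then have "det N * det X = fls_X_intpow (f 1) * fls_X_intpow (f 2) * fls_X_intpow (f 3)"
    by (simp add: det_mul)
  also have "\<dots> = fls_X_intpow (exp_sum f)"
    by (simp only: fls_X_intpow_times_fls_X_intpow exp_sum_def)
  finally have NX: "det N * det X = fls_X_intpow (exp_sum f)" .
  then have dX: "det X \<noteq> 0"
    by (metis fls_X_intpow_nonzero mult_zero_right)
  have "fls_subdegree (det X) = exp_sum f"
    using arg_cong[OF NX, of fls_subdegree] det dX by simp
  moreover have "val_ge (e 1 + e 2 + e 3 + 0 + 0 + 0) (det X)"
    using xs(1) by (intro val_ge_det_3) (simp add: X_def diag_lattice_def)
  ultimately show ?thesis using le dX by (simp add: val_ge_def exp_sum_def)
qed

lemma GL3A_vact_diag_lattice: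
  fixes g :: "'a::field poly ^3^3"
  assumes g: "g \<in> GL3A"
    and act: "vact g (lat_class (diag_lattice e)) = lat_class (diag_lattice f :: ('a fls ^3) set)"
  obtains m where "exp_sum e = exp_sum f + 3 * m" "\<And>r s. g $ r $ s \<noteq> 0 \<Longrightarrow> f r + m \<le> e s"
proof -
  let ?L = "(\<lambda>x. mat_to_Finf g *v x) ` diag_lattice e"
  have "?L \<in> lat_class (diag_lattice f)"
    using act lat_class_self[of ?L] by (simp add: vact_lat_class)
  then obtain m where img: "?L = diag_lattice (\<lambda>r. f r + m)"
    using mem_lat_class_diag_lattice by blast
  have "exp_sum e = exp_sum f + 3 * m"
    using exp_sum_eq_of_image_diag_lattice[OF det_mat_to_Finf_GL3A[OF g] img] by simp
  moreover have "f r + m \<le> e s" if "g $ r $ s \<noteq> 0" for r s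
  proof -
    have "val_ge (f r + m - e s) (poly_to_Finf (g $ r $ s))"
      using val_ge_entries_of_image_subset[of _ e] img by (fastforce simp: mat_to_Finf_def)
    with that show ?thesis by (auto dest: val_ge_poly_to_Finf)
  qed
  ultimately show thesis by (rule that)
qed

definition parabolic_algebra :: "(3 \<Rightarrow> int) \<Rightarrow> ('a::field ^3^3) set" where
  "parabolic_algebra e = {M. \<forall>r s. e s < e r \<longrightarrow> M $ r $ s = 0}"

definition parabolic :: "(3 \<Rightarrow> int) \<Rightarrow> ('a::field ^3^3) set" where
  "parabolic e = GL3F \<inter> parabolic_algebra e"

lemma parabolic_algebra_add: "M \<in> parabolic_algebra e \<Longrightarrow> B \<in> parabolic_algebra e \<Longrightarrow> M + B \<in> parabolic_algebra e"
  by (simp add: parabolic_algebra_def)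

lemma parabolic_algebra_diff: "M \<in> parabolic_algebra e \<Longrightarrow> B \<in> parabolic_algebra e \<Longrightarrow> M - B \<in> parabolic_algebra e"
  by (simp add: parabolic_algebra_def)

lemma mat_in_parabolic_algebra: "mat c \<in> parabolic_algebra e"
  by (auto simp: parabolic_algebra_def mat_def)

lemma parabolic_algebra_mult:
  assumes M: "M \<in> parabolic_algebra e" and B: "B \<in> parabolic_algebra e"
  shows "M ** B \<in> parabolic_algebra e"
proof -
  have "M $ r $ t * B $ t $ s = 0" if "e s < e r" for r s t
    using M B that by (cases "e t < e r") (auto simp: parabolic_algebra_def)
  then show ?thesis by (auto simp: parabolic_algebra_def matrix_matrix_mult_def intro: sum.neutral)
qed

definition principal_minors_sum :: "'a::comm_ring_1^3^3 \<Rightarrow> 'a" where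
  "principal_minors_sum M =
     M$1$1 * M$2$2 - M$1$2 * M$2$1 + M$1$1 * M$3$3 - M$1$3 * M$3$1 + M$2$2 * M$3$3 - M$2$3 * M$3$2"

lemma cayley_hamilton_3:
  fixes M :: "'a::comm_ring_1^3^3"
  shows "M ** (M ** M - mat (trace M) ** M + mat (principal_minors_sum M)) = mat (det M)"
  by (simp add: trace_def principal_minors_sum_def det_3 vec_eq_iff forall_3
      matrix_matrix_mult_def sum_3 mat_def algebra_simps)

lemma mat_mult_mat: "mat a ** mat b = (mat (a * b) :: 'a::semiring_1^'n^'n)"
proof -
  have "(mat a ** mat b) $ i $ j = (\<Sum>k\<in>UNIV. if k = i then (if i = j then a * b else 0) else 0)"
    for i j :: 'n
    unfolding matrix_matrix_mult_def mat_def by (simp only: vec_lambda_beta) (rule sum.cong; auto)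
  then show ?thesis by (simp add: vec_eq_iff mat_def)
qed

lemma parabolic_algebra_right_inverse:
  assumes M: "M \<in> parabolic_algebra e" and det: "det M \<noteq> 0"
  obtains B where "B \<in> parabolic_algebra e" "M ** B = mat 1"
proof -
  define C where "C = M ** M - mat (trace M) ** M + mat (principal_minors_sum M)"
  have "C \<in> parabolic_algebra e"
    unfolding C_def
    by (intro parabolic_algebra_add parabolic_algebra_diff parabolic_algebra_mult M mat_in_parabolic_algebra)
  then have "C ** mat (inverse (det M)) \<in> parabolic_algebra e"
    by (intro parabolic_algebra_mult mat_in_parabolic_algebra)
  moreover have "M ** (C ** mat (inverse (det M))) = mat (det M) ** mat (inverse (det M))"
    by (simp add: C_def matrix_mul_assoc cayley_hamilton_3)
  then have "M ** (C ** mat (inverse (det M))) = mat 1"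
    using det by (simp add: mat_mult_mat)
  ultimately show thesis by (rule that)
qed

definition const_lift :: "'a::field ^3^3 \<Rightarrow> 'a poly ^3^3" where
  "const_lift M = (\<chi> r s. [:M $ r $ s:])"

lemma pr_const_lift [simp]: "pr (const_lift M) = M"
  by (simp add: pr_def const_lift_def vec_eq_iff)

lemma const_lift_in_GL3A: "M \<in> GL3F \<Longrightarrow> const_lift M \<in> GL3A"
proof -
  have "det (const_lift M) = [:det M:]"
    by (simp add: det_3 const_lift_def)
  then show "M \<in> GL3F \<Longrightarrow> const_lift M \<in> GL3A"
    by (simp add: GL3A_def GL3F_def is_unit_const_poly_iff dvd_field_iff)
qed

lemma mat_to_Finf_const_lift: "mat_to_Finf (const_lift M) = (\<chi> r s. fls_const (M $ r $ s))"
  by (simp add: mat_to_Finf_def const_lift_def)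

lemma mat_to_Finf_const_lift_mult:
  "mat_to_Finf (const_lift (M ** B)) = mat_to_Finf (const_lift M) ** mat_to_Finf (const_lift B)"
  by (simp add: mat_to_Finf_const_lift matrix_matrix_mult_def fls_const_sum)

lemma mat_to_Finf_const_lift_1: "mat_to_Finf (const_lift (mat 1)) = mat 1"
  by (simp add: mat_to_Finf_const_lift mat_def vec_eq_iff)

lemma const_lift_image_diag_lattice_subset:
  assumes M: "M \<in> parabolic_algebra e"
  shows "(\<lambda>x. mat_to_Finf (const_lift M) *v x) ` diag_lattice e \<subseteq> diag_lattice e"
proof clarify
  fix x :: "'a fls ^3"
  assume x: "x \<in> diag_lattice e"
  have "val_ge (e r) (fls_const (M $ r $ s) * x $ s)" for r s
  proof (cases "M $ r $ s = 0")
    case False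
    then have "e r \<le> e s" using M by (force simp: parabolic_algebra_def)
    moreover have "val_ge (0 + e s) (fls_const (M $ r $ s) * x $ s)"
      using x by (intro val_ge_mult) (auto simp: val_ge_def diag_lattice_def)
    ultimately show ?thesis by (auto intro: val_ge_mono)
  qed simp
  then show "mat_to_Finf (const_lift M) *v x \<in> diag_lattice e"
    by (simp add: diag_lattice_def mat_to_Finf_const_lift matrix_vector_mult_def val_ge_sum)
qed

lemma const_lift_image_diag_lattice:
  assumes M: "M \<in> parabolic e"
  shows "(\<lambda>x. mat_to_Finf (const_lift M) *v x) ` diag_lattice e = diag_lattice e"
proof
  have Ma: "M \<in> parabolic_algebra e" and det: "det M \<noteq> 0"
    using M by (auto simp: parabolic_def GL3F_def)
  then show "(\<lambda>x. mat_to_Finf (const_lift M) *v x) ` diag_lattice e \<subseteq> diag_lattice e"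
    using const_lift_image_diag_lattice_subset by blast
  obtain B where B: "B \<in> parabolic_algebra e" "M ** B = mat 1"
    using parabolic_algebra_right_inverse[OF Ma det] .
  show "diag_lattice e \<subseteq> (\<lambda>x. mat_to_Finf (const_lift M) *v x) ` diag_lattice e"
  proof
    fix y :: "'a fls ^3"
    assume "y \<in> diag_lattice e"
    then have "mat_to_Finf (const_lift B) *v y \<in> diag_lattice e"
      using const_lift_image_diag_lattice_subset[OF B(1)] by blast
    moreover have "y = mat_to_Finf (const_lift M) *v (mat_to_Finf (const_lift B) *v y)"
      by (simp add: matrix_vector_mul_assoc mat_to_Finf_const_lift_mult[symmetric] B(2)
          mat_to_Finf_const_lift_1)
    ultimately show "y \<in> (\<lambda>x. mat_to_Finf (const_lift M) *v x) ` diag_lattice e" by blast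
  qed
qed

lemma pr_stab_vertex_diag_lattice:
  "pr ` stab_vertex (lat_class (diag_lattice e)) = (parabolic e :: ('a::field ^3^3) set)"
proof
  show "pr ` stab_vertex (lat_class (diag_lattice e)) \<subseteq> (parabolic e :: ('a ^3^3) set)"
  proof clarify
    fix g :: "'a poly ^3^3"
    assume "g \<in> stab_vertex (lat_class (diag_lattice e))"
    then have g: "g \<in> GL3A" and act: "vact g (lat_class (diag_lattice e)) = lat_class (diag_lattice e)"
      by (auto simp: stab_vertex_def)
    obtain m where "exp_sum e = exp_sum e + 3 * m"
      and entries: "\<And>r s. g $ r $ s \<noteq> 0 \<Longrightarrow> e r + m \<le> e s"
      using GL3A_vact_diag_lattice[OF g act] by blast
    then have "m = 0" by simp
    with entries have "g $ r $ s = 0" if "e s < e r" for r s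
      using that by force
    then show "pr g \<in> parabolic e"
      using pr_in_GL3F[OF g] by (simp add: parabolic_def parabolic_algebra_def pr_def)
  qed
  show "(parabolic e :: ('a ^3^3) set) \<subseteq> pr ` stab_vertex (lat_class (diag_lattice e))"
  proof
    fix M :: "'a ^3^3"
    assume M: "M \<in> parabolic e"
    then have "const_lift M \<in> stab_vertex (lat_class (diag_lattice e))"
      using const_lift_image_diag_lattice[OF M] const_lift_in_GL3A[of M]
      by (simp add: stab_vertex_def vact_lat_class parabolic_def)
    then show "M \<in> pr ` stab_vertex (lat_class (diag_lattice e))"
      using pr_const_lift[of M] by force
  qed
qed

lemma parabolic_vtx_exponents:
  assumes "j \<le> k"
  shows "(parabolic (vtx_exponents j k) :: ('a::field ^3^3) set) =
     (if j = 0 \<and> k = 0 then GL3F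
      else if j = 0 \<and> j < k then P0
      else if 0 < j \<and> j = k then P2
      else Borel)"
proof -
  have "parabolic_algebra (vtx_exponents j k) = {M :: 'a^3^3.
     (0 < j \<longrightarrow> M $ 2 $ 1 = 0) \<and> (0 < k \<longrightarrow> M $ 3 $ 1 = 0) \<and> (j < k \<longrightarrow> M $ 3 $ 2 = 0)}"
    using assms unfolding parabolic_algebra_def forall_3 by (auto simp: vtx_exponents_def)
  then show ?thesis
    using assms by (auto simp: parabolic_def P0_def P2_def Borel_def)
qed

lemma sorted_wrt_comparable:
  "sorted_wrt R xs \<Longrightarrow> a \<in> set xs \<Longrightarrow> b \<in> set xs \<Longrightarrow> a = b \<or> R a b \<or> R b a"
  by (induction xs) auto

text \<open>The lattices of a simplex lie between L_0 and pi L_0, whose exponent sums differ by 3.\<close>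
lemma diagonal_simplex_chain:
  fixes W :: "('a::field fls ^3) set set set"
  assumes "is_simplex W" and diag: "\<forall>v\<in>W. \<exists>e. v = lat_class (diag_lattice e)"
  obtains Es s0 where "W = (\<lambda>e. lat_class (diag_lattice e)) ` Es"
    "\<And>e. e \<in> Es \<Longrightarrow> s0 \<le> exp_sum e \<and> exp_sum e < s0 + 3"
    "\<And>e f. e \<in> Es \<Longrightarrow> f \<in> Es \<Longrightarrow> (\<forall>r. e r \<le> f r) \<or> (\<forall>r. f r \<le> e r)"
proof -
  obtain Ls where Ls: "Ls \<noteq> []" "W = lat_class ` set Ls" "sorted_wrt (\<supset>) Ls"
      "\<forall>L\<in>set Ls. (\<lambda>v. fls_X *s v) ` hd Ls \<subset> L"
    using assms(1) unfolding is_simplex_def by blast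
  have "\<exists>e. diag_lattice e = L" if "L \<in> set Ls" for L
    using diag Ls(2) that by (metis image_eqI lat_class_eq_diag_lattice)
  then obtain E where E: "\<And>L. L \<in> set Ls \<Longrightarrow> diag_lattice (E L) = L" by metis
  define e0 where "e0 = E (hd Ls)"
  have hd: "diag_lattice e0 = hd Ls"
    using Ls(1) E by (simp add: e0_def)
  have window: "exp_sum e0 \<le> exp_sum (E L) \<and> exp_sum (E L) < exp_sum e0 + 3"
    if L: "L \<in> set Ls" for L
  proof
    have "diag_lattice (E L) \<subseteq> (diag_lattice e0 :: ('a fls ^3) set)"
      using Ls(1,3) L by (cases Ls) (auto simp: E hd)
    then show "exp_sum e0 \<le> exp_sum (E L)"
      by (simp add: diag_lattice_subset_iff exp_sum_mono)
    have "diag_lattice (\<lambda>r. e0 r + 1) \<subset> (diag_lattice (E L) :: ('a fls ^3) set)"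
      using Ls(4) L smult_diag_lattice[of "fls_X :: 'a fls" e0] by (simp add: E[OF L] hd)
    then have "\<forall>r. E L r \<le> e0 r + 1" "E L \<noteq> (\<lambda>r. e0 r + 1)"
      using diag_lattice_subset_iff[of "\<lambda>r. e0 r + 1" "E L", where 'a='a] by auto
    then show "exp_sum (E L) < exp_sum e0 + 3"
      using exp_sum_strict_mono[of "E L" "\<lambda>r. e0 r + 1"] by simp
  qed
  have comparable: "(\<forall>r. E L r \<le> E L' r) \<or> (\<forall>r. E L' r \<le> E L r)"
    if "L \<in> set Ls" "L' \<in> set Ls" for L L'
  proof -
    have "diag_lattice (E L) \<subseteq> (diag_lattice (E L') :: ('a fls ^3) set)
        \<or> diag_lattice (E L') \<subseteq> (diag_lattice (E L) :: ('a fls ^3) set)"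
      using sorted_wrt_comparable[OF Ls(3) that] by (auto simp: E that)
    then show ?thesis by (auto simp: diag_lattice_subset_iff)
  qed
  have "W = (\<lambda>e. lat_class (diag_lattice e)) ` E ` set Ls"
    unfolding Ls(2) image_image by (rule image_cong) (simp_all add: E)
  moreover have "exp_sum e0 \<le> exp_sum e \<and> exp_sum e < exp_sum e0 + 3" if "e \<in> E ` set Ls" for e
    using that by (elim imageE) (simp add: window)
  moreover have "(\<forall>r. e r \<le> f r) \<or> (\<forall>r. f r \<le> e r)" if "e \<in> E ` set Ls" "f \<in> E ` set Ls" for e f
    using that by (elim imageE) (simp add: comparable)
  ultimately show thesis by (rule that)
qed

lemma stab_simplex_fixes_diag_vertex:
  fixes W :: "('a::field fls ^3) set set set"
  assumes W: "is_simplex W" "\<forall>v\<in>W. \<exists>e. v = lat_class (diag_lattice e)"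
    and g: "g \<in> stab_simplex W" and v: "v \<in> W"
  shows "vact g v = v"
proof -
  obtain Es s0 where Es: "W = (\<lambda>e. lat_class (diag_lattice e)) ` Es"
    and window: "\<And>e. e \<in> Es \<Longrightarrow> s0 \<le> exp_sum e \<and> exp_sum e < s0 + 3"
    and chain: "\<And>e f. e \<in> Es \<Longrightarrow> f \<in> Es \<Longrightarrow> (\<forall>r. e r \<le> f r) \<or> (\<forall>r. f r \<le> e r)"
    using diagonal_simplex_chain[OF W] by blast
  have gA: "g \<in> GL3A" and gW: "vact g ` W = W"
    using g by (auto simp: stab_simplex_def)
  obtain e where e: "e \<in> Es" "v = lat_class (diag_lattice e)"
    using v Es by blast
  obtain f where f: "f \<in> Es" "vact g v = lat_class (diag_lattice f)"
    using gW v Es by (metis imageE image_eqI)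
  obtain m where "exp_sum e = exp_sum f + 3 * m"
    using GL3A_vact_diag_lattice[OF gA] e(2) f(2) by metis
  with window[OF e(1)] window[OF f(1)] have "exp_sum e = exp_sum f"
    by presburger
  then have "e = f"
    using chain[OF e(1) f(1)] eq_of_le_exp_sum_eq by metis
  then show ?thesis using e(2) f(2) by simp
qed

lemma pr_stab_simplex_diag:
  fixes W :: "('a::field fls ^3) set set set"
  assumes W: "is_simplex W" "\<forall>v\<in>W. \<exists>e. v = lat_class (diag_lattice e)"
  shows "pr ` stab_simplex W = (\<Inter>v\<in>W. pr ` stab_vertex v)"
proof
  show "pr ` stab_simplex W \<subseteq> (\<Inter>v\<in>W. pr ` stab_vertex v)"
  proof clarify
    fix g v
    assume g: "g \<in> stab_simplex W" and v: "v \<in> W"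
    then have "g \<in> stab_vertex v"
      using stab_simplex_fixes_diag_vertex[OF W g v] by (simp add: stab_simplex_def stab_vertex_def)
    then show "pr g \<in> pr ` stab_vertex v" by (rule imageI)
  qed
  show "(\<Inter>v\<in>W. pr ` stab_vertex v) \<subseteq> pr ` stab_simplex W"
  proof
    fix M :: "'a ^3^3"
    assume M: "M \<in> (\<Inter>v\<in>W. pr ` stab_vertex v)"
    have parab: "M \<in> parabolic e" if "lat_class (diag_lattice e) \<in> W" for e
      using M that pr_stab_vertex_diag_lattice[of e] by blast
    have "W \<noteq> {}"
      using W(1) by (auto simp: is_simplex_def)
    then obtain v where "v \<in> W" by blast
    then have "M \<in> GL3F"
      using W(2) parab by (auto simp: parabolic_def)
    moreover have "vact (const_lift M) v = v" if v: "v \<in> W" for v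
    proof -
      obtain e where e: "v = lat_class (diag_lattice e)"
        using W(2) v by blast
      then have "M \<in> parabolic e"
        using parab v by simp
      then show ?thesis
        using e by (simp add: vact_lat_class const_lift_image_diag_lattice)
    qed
    ultimately have "const_lift M \<in> stab_simplex W"
      by (simp add: stab_simplex_def const_lift_in_GL3A)
    then show "M \<in> pr ` stab_simplex W"
      using pr_const_lift[of M] by force
  qed
qed

theorem corollary2p10:
  shows "(\<forall>j k :: nat. j \<le> k \<longrightarrow>
            pr ` stab_vertex (vtx j k :: ('a::{finite,field} fls ^3) set set) =
            (if j = 0 \<and> k = 0 then GL3F
             else if j = 0 \<and> j < k then P0
             else if 0 < j \<and> j = k then P2
             else Borel))
       \<and> (\<forall>W :: ('a fls ^3) set set set.
            is_simplex W \<and> card W \<ge> 2 \<and>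
            (\<forall>v\<in>W. \<exists>j k :: nat. j \<le> k \<and> v = vtx j k) \<longrightarrow>
            pr ` stab_simplex W = (\<Inter>v\<in>W. pr ` stab_vertex v))"
proof (intro conjI allI impI)
  fix j k :: nat
  assume "j \<le> k"
  then show "pr ` stab_vertex (vtx j k :: ('a fls ^3) set set) =
            (if j = 0 \<and> k = 0 then GL3F
             else if j = 0 \<and> j < k then P0
             else if 0 < j \<and> j = k then P2
             else Borel)"
    by (simp add: vtx_eq_lat_class_diag_lattice pr_stab_vertex_diag_lattice parabolic_vtx_exponents)
next
  fix W :: "('a fls ^3) set set set"
  assume W: "is_simplex W \<and> card W \<ge> 2 \<and> (\<forall>v\<in>W. \<exists>j k :: nat. j \<le> k \<and> v = vtx j k)"
  then have "\<forall>v\<in>W. \<exists>e. v = lat_class (diag_lattice e)"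
    by (auto simp: vtx_eq_lat_class_diag_lattice)
  with W show "pr ` stab_simplex W = (\<Inter>v\<in>W. pr ` stab_vertex v)"
    by (intro pr_stab_simplex_diag) simp_all
qed

end
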